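(* Let $\Gamma$ be a finitely generated abelian group, $\mathcal{A}=\{\alpha_1,\dots,\alpha_n\}\subset\Gamma$ a finite list, $G$ a torsion-wise finite abelian group, and fix $\alpha_i\in\mathcal{A}$. Let $\mathcal{A}'=\mathcal{A}\smallsetminus\{\alpha_i\}\subset\Gamma$ and $\mathcal{A}''=\{\overline{\alpha_j}\mid j\ne i\}\subset\Gamma/\langle\alpha_i\rangle$, both lists indexed by $[n]\smallsetminus\{i\}$ so that the variables $v_j$ ($j\neq i$) are attached to the same index. Then $$Z^G_{\mathcal{A}}(q,\boldsymbol v)=\begin{cases}Z^G_{\mathcal{A}'}(q,\boldsymbol v)+v_i\,Z^G_{\mathcal{A}''}(q,\boldsymbol v),&\text{if }\alpha_i\text{ is a loop},\\ Z^G_{\mathcal{A}'}(q,\boldsymbol v)+v_i\,q^{-1}\,Z^G_{\mathcal{A}''}(q,\boldsymbol v),&\text{otherwise.}\end{cases}$$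
   Context: An abelian group $G$ is torsion-wise finite if $G[d]=\{x\in G\mid dx=0\}$ is finite for every $d>0$. Lists are multisets with sublists distinguished by index. For a sublist $\mathcal{S}$ of a list in a finitely generated abelian group $\Gamma$, $r_{\mathcal{S}}$ is the rank of $\langle\mathcal{S}\rangle$ and the $G$-multiplicity is $m(\mathcal{S};G)=\#\mathrm{Hom}((\Gamma/\langle\mathcal{S}\rangle)_{\mathrm{tor}},G)$ (the subscript tor denotes the torsion subgroup). The multivariate $G$-Tutte polynomial is $Z^G_{\mathcal{A}}(q,v_1,\dots,v_n)=\sum_{\mathcal{S}\subset\mathcal{A}}m(\mathcal{S};G)\,q^{-r_{\mathcal{S}}}\prod_{\alpha_i\in\mathcal{S}}v_i$ (for $\mathcal{A}''$ the multiplicities and ranks are computed in $\Gamma/\langle\alpha_i\rangle$). An element $\alpha\in\mathcal{A}$ is a loop if $\alpha\in\Gamma_{\mathrm{tor}}$. *)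

theory Defs
  imports "HOL-Algebra.Algebra" Complex_Main
begin

definition torsion_set :: "('a, 'b) monoid_scheme \<Rightarrow> 'a set" where
  "torsion_set H = {x \<in> carrier H. \<exists>n::nat. n > 0 \<and> x [^]\<^bsub>H\<^esub> n = \<one>\<^bsub>H\<^esub>}"

definition torsion_group :: "('a, 'b) monoid_scheme \<Rightarrow> ('a, 'b) monoid_scheme" where
  "torsion_group H = H\<lparr>carrier := torsion_set H\<rparr>"

definition torsion_wise_finite :: "('a, 'b) monoid_scheme \<Rightarrow> bool" where
  "torsion_wise_finite G \<longleftrightarrow>
     (\<forall>d::nat. d > 0 \<longrightarrow> finite {x \<in> carrier G. x [^]\<^bsub>G\<^esub> d = \<one>\<^bsub>G\<^esub>})"

definition finitely_generated_group :: "('a, 'b) monoid_scheme \<Rightarrow> bool" where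
  "finitely_generated_group H \<longleftrightarrow>
     (\<exists>S. finite S \<and> S \<subseteq> carrier H \<and> generate H S = carrier H)"

(* #Hom(A,B): homomorphisms are counted as functions on the carrier of A *)
definition num_hom :: "('a, 'b) monoid_scheme \<Rightarrow> ('c, 'd) monoid_scheme \<Rightarrow> nat" where
  "num_hom A B = card ((\<lambda>h. restrict h (carrier A)) ` hom A B)"

definition lin_indep :: "('a, 'b) monoid_scheme \<Rightarrow> 'a set \<Rightarrow> bool" where
  "lin_indep H Xs \<longleftrightarrow> finite Xs \<and> Xs \<subseteq> carrier H \<and>
     (\<forall>c :: 'a \<Rightarrow> int. finprod H (\<lambda>x. x [^]\<^bsub>H\<^esub> (c x)) Xs = \<one>\<^bsub>H\<^esub> \<longrightarrow> (\<forall>x\<in>Xs. c x = 0))"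

definition ab_rank :: "('a, 'b) monoid_scheme \<Rightarrow> nat" where
  "ab_rank H = Max {card Xs | Xs. lin_indep H Xs}"

definition gen_rank :: "('a, 'b) monoid_scheme \<Rightarrow> 'a set \<Rightarrow> nat" where
  "gen_rank Gam Xs = ab_rank (Gam\<lparr>carrier := generate Gam Xs\<rparr>)"

definition G_mult :: "('a, 'b) monoid_scheme \<Rightarrow> ('c, 'd) monoid_scheme \<Rightarrow> 'a set \<Rightarrow> nat" where
  "G_mult Gam G Xs = num_hom (torsion_group (Gam Mod generate Gam Xs)) G"

definition is_loop :: "('a, 'b) monoid_scheme \<Rightarrow> 'a \<Rightarrow> bool" where
  "is_loop Gam a \<longleftrightarrow> a \<in> torsion_set Gam"

(* Multivariate G-Tutte polynomial of the list (A j)_{j \<in> I} in Gam, evaluated at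
   q and v = (v_j); sublists are subsets of the index set I. *)
definition tutteZ :: "('a, 'b) monoid_scheme \<Rightarrow> ('c, 'd) monoid_scheme \<Rightarrow> (nat \<Rightarrow> 'a) \<Rightarrow> nat set
                      \<Rightarrow> real \<Rightarrow> (nat \<Rightarrow> real) \<Rightarrow> real" where
  "tutteZ Gam G A I q v =
     (\<Sum>S\<in>Pow I. real (G_mult Gam G (A ` S)) * (inverse q) ^ gen_rank Gam (A ` S) * (\<Prod>j\<in>S. v j))"

end

theory Submission
  imports Defs
begin

(* Split the sum over sublists according to whether they contain i; a sublist containing i
   is insert i T. Put N = <alpha_i> and let pi : Gamma -> Gamma/N be the projection.
   By the third isomorphism theorem Gamma/<alpha_i, A T> is isomorphic to (Gamma/N)/<pi (A T)>,
   so the multiplicities of insert i T and of T in A'' agree. The rank of a subgroup M of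
   Gamma is the largest size of a family in M independent modulo 1, and the rank of pi M is
   the largest size of a family in M independent modulo N; a Steinitz exchange argument
   bounds these sizes in the finitely generated group Gamma. If alpha_i has finite order the
   two notions of independence coincide. Otherwise alpha_i extends every family independent
   modulo N, and deleting a suitable element from a nonempty family independent modulo 1
   leaves one independent modulo N, so the ranks differ by exactly one, contributing the
   factor q^-1. *)

definition lin_comb :: "('a, 'b) monoid_scheme \<Rightarrow> ('a \<Rightarrow> int) \<Rightarrow> 'a set \<Rightarrow> 'a" where
  "lin_comb H c Y = finprod H (\<lambda>x. x [^]\<^bsub>H\<^esub> c x) Y"

(* The classes of the elements of Y in H/N are pairwise distinct and Z-linearly independent;
   for N = {1} this is lin_indep. *)
definition indep_mod :: "('a, 'b) monoid_scheme \<Rightarrow> 'a set \<Rightarrow> 'a set \<Rightarrow> bool" where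
  "indep_mod H N Y \<longleftrightarrow> finite Y \<and> Y \<subseteq> carrier H \<and>
     (\<forall>c. lin_comb H c Y \<in> N \<longrightarrow> (\<forall>x\<in>Y. c x = 0))"

definition indep_mod_cards :: "('a, 'b) monoid_scheme \<Rightarrow> 'a set \<Rightarrow> 'a set \<Rightarrow> nat set" where
  "indep_mod_cards H N M = {card Y | Y. Y \<subseteq> M \<and> indep_mod H N Y}"

section \<open>Independence modulo a subgroup\<close>

context comm_group
begin

lemma lin_comb_closed [simp]: "Y \<subseteq> carrier G \<Longrightarrow> lin_comb G c Y \<in> carrier G"
  unfolding lin_comb_def by (intro finprod_closed) auto

lemma lin_comb_cong:
  "(\<And>x. x \<in> Y \<Longrightarrow> c x = d x) \<Longrightarrow> Y \<subseteq> carrier G \<Longrightarrow> lin_comb G c Y = lin_comb G d Y"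
  unfolding lin_comb_def by (auto intro!: finprod_cong' simp: subset_iff)

lemma lin_comb_zero [simp]: "lin_comb G (\<lambda>_. 0) Y = \<one>"
  unfolding lin_comb_def by (rule finprod_one_eqI) simp

lemma lin_comb_add:
  assumes "Y \<subseteq> carrier G"
  shows "lin_comb G c Y \<otimes> lin_comb G d Y = lin_comb G (\<lambda>x. c x + d x) Y"
proof -
  have "lin_comb G (\<lambda>x. c x + d x) Y = finprod G (\<lambda>x. x [^] c x \<otimes> x [^] d x) Y"
    unfolding lin_comb_def using assms by (intro finprod_cong') (auto simp: int_pow_mult subset_iff)
  also have "\<dots> = lin_comb G c Y \<otimes> lin_comb G d Y"
    unfolding lin_comb_def using assms by (subst finprod_multf) (auto simp: subset_iff)
  finally show ?thesis by simp
qed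

lemma lin_comb_insert:
  "finite Y \<Longrightarrow> x \<notin> Y \<Longrightarrow> insert x Y \<subseteq> carrier G \<Longrightarrow>
   lin_comb G c (insert x Y) = x [^] c x \<otimes> lin_comb G c Y"
  unfolding lin_comb_def by (subst finprod_insert) (auto simp: subset_iff)

lemma lin_comb_int_pow:
  "finite Y \<Longrightarrow> Y \<subseteq> carrier G \<Longrightarrow> lin_comb G c Y [^] (k::int) = lin_comb G (\<lambda>x. k * c x) Y"
proof (induction Y rule: finite_induct)
  case empty
  then show ?case by (simp add: lin_comb_def)
next
  case (insert x F)
  then show ?case
    by (simp add: lin_comb_insert int_pow_distrib int_pow_pow mult.commute)
qed

lemma lin_comb_extend:
  "finite Y \<Longrightarrow> Z \<subseteq> Y \<Longrightarrow> Y \<subseteq> carrier G \<Longrightarrow>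
   lin_comb G (\<lambda>x. if x \<in> Z then c x else 0) Y = lin_comb G c Z"
  unfolding lin_comb_def by (rule finprod_mono_neutral_cong_right) (auto simp: subset_iff)

lemma indep_mod_subset:
  assumes indep: "indep_mod G N Y" and ZY: "Z \<subseteq> Y"
  shows "indep_mod G N Z"
  unfolding indep_mod_def
proof (intro conjI allI impI ballI)
  have fin: "finite Y" and Y: "Y \<subseteq> carrier G"
    and zero: "\<And>c. lin_comb G c Y \<in> N \<Longrightarrow> \<forall>x\<in>Y. c x = 0"
    using indep unfolding indep_mod_def by auto
  show "finite Z" "Z \<subseteq> carrier G"
    using fin Y ZY finite_subset by auto
  fix c x assume "lin_comb G c Z \<in> N" and x: "x \<in> Z"
  then have "lin_comb G (\<lambda>x. if x \<in> Z then c x else 0) Y \<in> N"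
    using lin_comb_extend[OF fin ZY Y] by simp
  then have "(\<lambda>x. if x \<in> Z then c x else 0) x = 0"
    using zero x ZY by blast
  then show "c x = 0"
    using x by simp
qed

lemma indep_mod_antimono: "N' \<subseteq> N \<Longrightarrow> indep_mod G N Y \<Longrightarrow> indep_mod G N' Y"
  unfolding indep_mod_def by blast

lemma zero_in_indep_mod_cards: "0 \<in> indep_mod_cards G N M"
proof -
  have "0 = card {} \<and> {} \<subseteq> M \<and> indep_mod G N {}"
    by (simp add: indep_mod_def)
  then show ?thesis
    unfolding indep_mod_cards_def by blast
qed

lemma generate_insert_subgroupE:
  assumes N: "subgroup N G" and g: "g \<in> carrier G" and x: "x \<in> generate G (insert g N)"
  obtains n e where "n \<in> N" "x = n \<otimes> g [^] (e::int)"
proof -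
  interpret second_isomorphism_grp N G "generate G {g}"
    by (simp add: second_isomorphism_grp_def second_isomorphism_grp_axioms_def
        subgroup_imp_normal N g generate_is_subgroup)
  have "g \<in> generate G {g}"
    by (rule generate.incl) simp
  then have "insert g N \<subseteq> N <#> generate G {g}"
    using S_contained_in_set_mult H_contained_in_set_mult by blast
  then have "generate G (insert g N) \<subseteq> N <#> generate G {g}"
    by (intro generate_subgroup_incl normal_set_mult_subgroup)
  with x obtain n y where "n \<in> N" "y \<in> generate G {g}" "x = n \<otimes> y"
    unfolding set_mult_def by blast
  moreover from \<open>y \<in> generate G {g}\<close> obtain e where "y = g [^] (e::int)"
    unfolding generate_pow[OF g] by blast
  ultimately show thesis
    using that by blast
qed

lemma indep_mod_generate_insert_torsion:
  assumes N: "subgroup N G" and g: "g \<in> carrier G"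
    and k: "k \<noteq> (0::int)" "g [^] k \<in> N" and indep: "indep_mod G N Y"
  shows "indep_mod G (generate G (insert g N)) Y"
  unfolding indep_mod_def
proof (intro conjI allI impI ballI)
  have fin: "finite Y" and Y: "Y \<subseteq> carrier G"
    and zero: "\<And>c. lin_comb G c Y \<in> N \<Longrightarrow> \<forall>x\<in>Y. c x = 0"
    using indep unfolding indep_mod_def by auto
  show "finite Y" "Y \<subseteq> carrier G" by fact+
  fix c x assume c: "lin_comb G c Y \<in> generate G (insert g N)" and x: "x \<in> Y"
  from c obtain n e where n: "n \<in> N" and comb: "lin_comb G c Y = n \<otimes> g [^] (e::int)"
    by (rule generate_insert_subgroupE[OF N g])
  have nc: "n \<in> carrier G"
    using n N subgroup.subset by blast
  have "lin_comb G (\<lambda>x. k * c x) Y = (n \<otimes> g [^] e) [^] k"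
    using lin_comb_int_pow[OF fin Y, of c k] comb by simp
  also have "\<dots> = n [^] k \<otimes> (g [^] k) [^] e"
    using nc g by (simp add: int_pow_distrib int_pow_pow mult.commute)
  also have "\<dots> \<in> N"
    using n k N by (simp add: subgroup.m_closed subgroup_int_pow_closed)
  finally have "k * c x = 0"
    using zero x by blast
  then show "c x = 0"
    using k by simp
qed

lemma indep_mod_generate_insert_Diff:
  assumes N: "subgroup N G" and g: "g \<in> carrier G" and indep: "indep_mod G N Y"
    and x0: "x0 \<in> Y" "c x0 \<noteq> 0" and c: "lin_comb G c Y \<in> generate G (insert g N)"
  shows "indep_mod G (generate G (insert g N)) (Y - {x0})"
  unfolding indep_mod_def
proof (intro conjI allI impI ballI)
  have fin: "finite Y" and Y: "Y \<subseteq> carrier G"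
    and zero: "\<And>c. lin_comb G c Y \<in> N \<Longrightarrow> \<forall>x\<in>Y. c x = 0"
    using indep unfolding indep_mod_def by auto
  have Nc: "N \<subseteq> carrier G"
    using N subgroup.subset by blast
  show "finite (Y - {x0})" "Y - {x0} \<subseteq> carrier G"
    using fin Y by auto
  from c obtain n e where n: "n \<in> N" and comb_c: "lin_comb G c Y = n \<otimes> g [^] (e::int)"
    by (rule generate_insert_subgroupE[OF N g])
  have e: "e \<noteq> 0"
  proof
    assume "e = 0"
    then have "lin_comb G c Y \<in> N"
      using comb_c n Nc by auto
    then show False
      using zero x0 by blast
  qed
  fix d x assume d: "lin_comb G d (Y - {x0}) \<in> generate G (insert g N)" and x: "x \<in> Y - {x0}"
  from d obtain n' f where n': "n' \<in> N" and comb_d: "lin_comb G d (Y - {x0}) = n' \<otimes> g [^] (f::int)"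
    by (rule generate_insert_subgroupE[OF N g])
  \<comment> \<open>Eliminating \<open>g\<close> between the relations \<open>c\<close> and \<open>d\<close> gives a relation modulo \<open>N\<close>.\<close>
  define d' where "d' = (\<lambda>x. if x \<in> Y - {x0} then d x else 0)"
  have "lin_comb G d' Y = n' \<otimes> g [^] f"
    using lin_comb_extend[OF fin _ Y, of "Y - {x0}" d] comb_d unfolding d'_def by auto
  then have A: "lin_comb G (\<lambda>x. e * d' x) Y = n' [^] e \<otimes> g [^] (f * e)"
    using lin_comb_int_pow[OF fin Y, of d' e] n' Nc g by (auto simp: int_pow_distrib int_pow_pow)
  have B: "lin_comb G (\<lambda>x. - f * c x) Y = n [^] (- f) \<otimes> g [^] (- (f * e))"
    using lin_comb_int_pow[OF fin Y, of c "- f"] comb_c n Nc g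
    by (auto simp: int_pow_distrib int_pow_pow mult.commute)
  have "lin_comb G (\<lambda>x. e * d' x + - f * c x) Y
      = lin_comb G (\<lambda>x. e * d' x) Y \<otimes> lin_comb G (\<lambda>x. - f * c x) Y"
    by (rule lin_comb_add[OF Y, symmetric])
  also have "\<dots> = (n' [^] e \<otimes> g [^] (f * e)) \<otimes> (n [^] (- f) \<otimes> g [^] (- (f * e)))"
    by (simp only: A B)
  also have "\<dots> = n' [^] e \<otimes> n [^] (- f) \<otimes> (g [^] (f * e) \<otimes> g [^] (- (f * e)))"
    using n n' Nc g by (simp add: subset_iff m_ac)
  also have "\<dots> = n' [^] e \<otimes> n [^] (- f)"
    using n n' Nc g by (simp add: subset_iff int_pow_mult[symmetric])
  also have "\<dots> \<in> N"
    using n n' N by (simp add: subgroup.m_closed subgroup_int_pow_closed)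
  finally have rel: "\<And>y. y \<in> Y \<Longrightarrow> e * d' y + - f * c y = 0"
    using zero by blast
  then have "f = 0"
    using rel[OF \<open>x0 \<in> Y\<close>] x0 unfolding d'_def by simp
  then show "d x = 0"
    using rel[of x] x e unfolding d'_def by simp
qed

lemma indep_mod_generate_insert_exchange:
  assumes N: "subgroup N G" and g: "g \<in> carrier G"
    and indep: "indep_mod G N Y" and dep: "\<not> indep_mod G (generate G (insert g N)) Y"
  shows "\<exists>x\<in>Y. indep_mod G (generate G (insert g N)) (Y - {x})"
proof -
  obtain c x where "x \<in> Y" "c x \<noteq> 0" "lin_comb G c Y \<in> generate G (insert g N)"
    using dep indep unfolding indep_mod_def by blast
  then show ?thesis
    using indep_mod_generate_insert_Diff[OF N g indep] by blast
qed

(* Steinitz exchange, adjoining the generators in F to N one at a time. *)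
lemma card_indep_mod_le:
  assumes "finite F" "F \<subseteq> carrier G" "subgroup N G" "generate G (N \<union> F) = carrier G"
    and "indep_mod G N Y"
  shows "card Y \<le> card F"
  using assms
proof (induction F arbitrary: N Y rule: finite_induct)
  case empty
  then have "carrier G = N"
    using generate_subgroup_incl[of N N] generate_incl[of N] subgroup.subset by fastforce
  moreover have "lin_comb G (\<lambda>_. 1) Y \<in> carrier G"
    using empty.prems(4) unfolding indep_mod_def by simp
  ultimately have "\<forall>x\<in>Y. (1::int) = 0"
    using empty.prems(4) unfolding indep_mod_def by blast
  then show ?case
    by (simp add: ex_in_conv[symmetric])
next
  case (insert g F)
  have g: "g \<in> carrier G"
    using insert.prems by auto
  define N' where "N' = generate G (insert g N)"
  have N': "subgroup N' G"
    unfolding N'_def using generate_is_subgroup g subgroup.subset[OF insert.prems(2)] by auto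
  have "insert g N \<subseteq> N'"
    unfolding N'_def by (auto intro: generate.incl)
  then have "generate G (N \<union> insert g F) \<subseteq> generate G (N' \<union> F)"
    by (intro mono_generate) blast
  moreover have "generate G (N' \<union> F) \<subseteq> carrier G"
    using insert.prems(1) subgroup.subset[OF N'] by (intro generate_incl) auto
  ultimately have "generate G (N' \<union> F) = carrier G"
    using insert.prems(3) by auto
  then have IH: "\<And>Z. indep_mod G N' Z \<Longrightarrow> card Z \<le> card F"
    using insert.IH insert.prems N' by blast
  have card_insert: "card (insert g F) = Suc (card F)"
    using insert.hyps by simp
  show ?case
  proof (cases "indep_mod G N' Y")
    case True
    then show ?thesis
      using IH card_insert by fastforce
  next
    case False
    then obtain x where "x \<in> Y" "indep_mod G N' (Y - {x})"
      unfolding N'_def using indep_mod_generate_insert_exchange insert.prems g by blast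
    moreover have "finite Y"
      using insert.prems unfolding indep_mod_def by blast
    ultimately show ?thesis
      using IH[of "Y - {x}"] card_insert by (simp add: card_Diff_singleton_if)
  qed
qed

lemma finite_indep_mod_cards:
  assumes "finitely_generated_group G" and N: "subgroup N G"
  shows "finite (indep_mod_cards G N M)"
proof -
  obtain F where F: "finite F" "F \<subseteq> carrier G" "generate G F = carrier G"
    using assms(1) unfolding finitely_generated_group_def by blast
  then have "generate G ({\<one>} \<union> F) = carrier G"
    using mono_generate[of F "{\<one>} \<union> F"] generate_incl[of "{\<one>} \<union> F"] by auto
  then have "card Y \<le> card F" if "indep_mod G N Y" for Y
    using card_indep_mod_le[OF F(1,2) triv_subgroup]
      indep_mod_antimono[OF _ that] subgroup.one_closed[OF N] by blast
  then have "indep_mod_cards G N M \<subseteq> {..card F}"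
    unfolding indep_mod_cards_def by auto
  then show ?thesis
    using finite_subset by blast
qed

section \<open>Ranks of subgroups and of their images in quotients\<close>

lemma comm_group_subgroup: "subgroup M G \<Longrightarrow> comm_group (G\<lparr>carrier := M\<rparr>)"
  by (rule group.group_comm_groupI[OF subgroup_imp_group]) (auto simp: m_comm subgroup.mem_carrier)

lemma finprod_subgroup:
  assumes M: "subgroup M G" and "finite Y" "f \<in> Y \<rightarrow> M"
  shows "finprod (G\<lparr>carrier := M\<rparr>) f Y = finprod G f Y"
  using \<open>finite Y\<close> \<open>f \<in> Y \<rightarrow> M\<close>
proof (induction Y rule: finite_induct)
  case empty
  then show ?case
    using subgroup.one_closed[OF M] by (simp add: finprod_def foldD_empty)
next
  case (insert x F)
  interpret M: comm_group "G\<lparr>carrier := M\<rparr>"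
    using comm_group_subgroup[OF M] .
  have "f x \<in> M" "f \<in> F \<rightarrow> M"
    using insert.prems by auto
  moreover have "f x \<in> carrier G" "f \<in> F \<rightarrow> carrier G"
    using calculation subgroup.subset[OF M] by auto
  ultimately show ?case
    using insert M.finprod_insert[of F x f] finprod_insert[of F x f] by simp
qed

lemma lin_comb_subgroup:
  assumes M: "subgroup M G" and "finite Y" "Y \<subseteq> M"
  shows "lin_comb (G\<lparr>carrier := M\<rparr>) c Y = lin_comb G c Y"
proof -
  have pow_in_M: "(\<lambda>x. x [^] c x) \<in> Y \<rightarrow> M"
    using \<open>Y \<subseteq> M\<close> subgroup_int_pow_closed[OF M] by auto
  interpret M: comm_group "G\<lparr>carrier := M\<rparr>"
    using comm_group_subgroup[OF M] .
  have "lin_comb (G\<lparr>carrier := M\<rparr>) c Y = finprod (G\<lparr>carrier := M\<rparr>) (\<lambda>x. x [^] c x) Y"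
    unfolding lin_comb_def using assms int_pow_consistent[OF M] subgroup_int_pow_closed[OF M]
    by (intro M.finprod_cong') (auto simp: subset_iff)
  also have "\<dots> = lin_comb G c Y"
    unfolding lin_comb_def using finprod_subgroup[OF M \<open>finite Y\<close> pow_in_M] .
  finally show ?thesis .
qed

lemma lin_indep_subgroup_iff:
  "subgroup M G \<Longrightarrow> lin_indep (G\<lparr>carrier := M\<rparr>) Y \<longleftrightarrow> Y \<subseteq> M \<and> indep_mod G {\<one>} Y"
  using lin_comb_subgroup[of M Y] subgroup.subset[of M G]
  unfolding lin_indep_def indep_mod_def lin_comb_def by auto

lemma ab_rank_subgroup:
  "subgroup M G \<Longrightarrow> ab_rank (G\<lparr>carrier := M\<rparr>) = Max (indep_mod_cards G {\<one>} M)"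
  unfolding ab_rank_def indep_mod_cards_def by (simp add: lin_indep_subgroup_iff)

end

lemma hom_finprod:
  assumes G: "comm_group G" and H: "comm_group H" and h: "h \<in> hom G H"
    and "finite Y" "f \<in> Y \<rightarrow> carrier G"
  shows "h (finprod G f Y) = finprod H (\<lambda>x. h (f x)) Y"
proof -
  interpret G: comm_group G by fact
  interpret H: comm_group H by fact
  interpret group_hom G H h
    using h by (simp add: group_hom_def group_hom_axioms_def G.is_group H.is_group)
  show ?thesis
    using \<open>finite Y\<close> \<open>f \<in> Y \<rightarrow> carrier G\<close>
  proof (induction Y rule: finite_induct)
    case empty
    then show ?case
      by simp
  next
    case (insert x F)
    then have "f x \<in> carrier G" "f \<in> F \<rightarrow> carrier G"
      by auto
    moreover have "h (f x) \<in> carrier H" "(\<lambda>x. h (f x)) \<in> F \<rightarrow> carrier H"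
      using calculation by (auto simp: Pi_iff)
    ultimately show ?case
      using insert G.finprod_insert[of F x f] H.finprod_insert[of F x "\<lambda>x. h (f x)"] by simp
  qed
qed

lemma lin_comb_hom:
  assumes G: "comm_group G" and H: "comm_group H" and h: "h \<in> hom G H"
    and "finite Z" "Z \<subseteq> carrier G" "inj_on h Z"
  shows "lin_comb H d (h ` Z) = h (lin_comb G (\<lambda>x. d (h x)) Z)"
proof -
  interpret G: comm_group G by fact
  interpret H: comm_group H by fact
  have pow: "h (x [^]\<^bsub>G\<^esub> (k::int)) = h x [^]\<^bsub>H\<^esub> k" if "x \<in> carrier G" for x k
    using hom_int_pow[OF h that G.is_group H.is_group] .
  have "lin_comb H d (h ` Z) = finprod H (\<lambda>x. h x [^]\<^bsub>H\<^esub> d (h x)) Z"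
    unfolding lin_comb_def using assms hom_in_carrier[OF h]
    by (subst H.finprod_reindex) (auto simp: subset_iff)
  also have "\<dots> = finprod H (\<lambda>x. h (x [^]\<^bsub>G\<^esub> d (h x))) Z"
    using assms hom_in_carrier[OF h] pow by (intro H.finprod_cong') (auto simp: subset_iff)
  also have "\<dots> = h (lin_comb G (\<lambda>x. d (h x)) Z)"
    unfolding lin_comb_def using assms by (subst hom_finprod) (auto simp: subset_iff)
  finally show ?thesis .
qed

context comm_group
begin

lemma rcos_eq_self_iff: "subgroup N G \<Longrightarrow> x \<in> carrier G \<Longrightarrow> N #> x = N \<longleftrightarrow> x \<in> N"
  by (metis coset_join2 rcos_self)

lemma rcos_hom_FactGroup: "subgroup N G \<Longrightarrow> (\<lambda>x. N #> x) \<in> hom G (G Mod N)"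
  using normal.r_coset_hom_Mod[OF subgroup_imp_normal] .

lemma group_hom_rcos_FactGroup: "subgroup N G \<Longrightarrow> group_hom G (G Mod N) (\<lambda>x. N #> x)"
  using rcos_hom_FactGroup normal.factorgroup_is_group[OF subgroup_imp_normal]
  by (simp add: group_hom_def group_hom_axioms_def is_group)

lemma subgroup_rcos_image:
  "subgroup N G \<Longrightarrow> subgroup M G \<Longrightarrow> subgroup ((\<lambda>x. N #> x) ` M) (G Mod N)"
  using group_hom.subgroup_img_is_subgroup[OF group_hom_rcos_FactGroup] .

lemma lin_comb_FactGroup_image:
  assumes N: "subgroup N G" and "finite Z" "Z \<subseteq> carrier G" "inj_on (\<lambda>x. N #> x) Z"
  shows "lin_comb (G Mod N) d ((\<lambda>x. N #> x) ` Z) = \<one>\<^bsub>G Mod N\<^esub>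
     \<longleftrightarrow> lin_comb G (\<lambda>x. d (N #> x)) Z \<in> N"
  using lin_comb_hom[OF comm_group_axioms abelian_FactGroup[OF N] rcos_hom_FactGroup[OF N]
      assms(2-4)]
    rcos_eq_self_iff[OF N] \<open>Z \<subseteq> carrier G\<close> by simp

lemma inj_on_rcos_if_indep_mod:
  assumes N: "subgroup N G" and indep: "indep_mod G N Z"
  shows "inj_on (\<lambda>x. N #> x) Z"
proof (rule inj_onI, rule ccontr)
  fix x y assume x: "x \<in> Z" and y: "y \<in> Z" and eq: "N #> x = N #> y" and "x \<noteq> y"
  have fin: "finite Z" and Z: "Z \<subseteq> carrier G"
    using indep unfolding indep_mod_def by auto
  then have xc: "x \<in> carrier G" and yc: "y \<in> carrier G"
    using x y by auto
  define c where "c = (\<lambda>z. if z \<in> {x, y} then if z = x then 1 else - 1 else 0 :: int)"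
  have "lin_comb G c Z = lin_comb G (\<lambda>z. if z = x then 1 else - 1) {x, y}"
    unfolding c_def using lin_comb_extend[OF fin _ Z, of "{x, y}"] x y by simp
  also have "\<dots> = x \<otimes> inv y"
    using lin_comb_insert[of "{y}" x] lin_comb_insert[of "{}" y] \<open>x \<noteq> y\<close> xc yc
    by (simp add: lin_comb_def int_pow_neg)
  also have "\<dots> \<in> N"
    using eq xc yc N by (metis rcos_self subgroup.rcos_module_imp is_group)
  finally have "c x = 0"
    using indep x unfolding indep_mod_def by blast
  then show False
    unfolding c_def by simp
qed

lemma indep_mod_FactGroup_image_iff:
  assumes N: "subgroup N G" and Z: "Z \<subseteq> carrier G" and inj: "inj_on (\<lambda>x. N #> x) Z"
  shows "indep_mod (G Mod N) {\<one>\<^bsub>G Mod N\<^esub>} ((\<lambda>x. N #> x) ` Z) \<longleftrightarrow> indep_mod G N Z"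
proof -
  let ?\<pi> = "\<lambda>x. N #> x"
  have img: "?\<pi> ` Z \<subseteq> carrier (G Mod N)"
    using Z hom_in_carrier[OF rcos_hom_FactGroup[OF N]] by blast
  have "finite (?\<pi> ` Z) \<longleftrightarrow> finite Z"
    using inj by (simp add: finite_image_iff)
  moreover
  have "(\<forall>d. lin_comb (G Mod N) d (?\<pi> ` Z) \<in> {\<one>\<^bsub>G Mod N\<^esub>} \<longrightarrow> (\<forall>y\<in>?\<pi> ` Z. d y = 0))
      \<longleftrightarrow> (\<forall>c. lin_comb G c Z \<in> N \<longrightarrow> (\<forall>x\<in>Z. c x = 0))" if fin: "finite Z"
  proof
    assume indep_img: "\<forall>d. lin_comb (G Mod N) d (?\<pi> ` Z) \<in> {\<one>\<^bsub>G Mod N\<^esub>} \<longrightarrow> (\<forall>y\<in>?\<pi> ` Z. d y = 0)"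
    show "\<forall>c. lin_comb G c Z \<in> N \<longrightarrow> (\<forall>x\<in>Z. c x = 0)"
    proof (intro allI impI ballI)
      fix c x assume c: "lin_comb G c Z \<in> N" and x: "x \<in> Z"
      define d where "d = (\<lambda>y. c (inv_into Z ?\<pi> y))"
      have "lin_comb G (\<lambda>x. d (?\<pi> x)) Z = lin_comb G c Z"
        unfolding d_def using inj Z by (intro lin_comb_cong) auto
      then have "lin_comb (G Mod N) d (?\<pi> ` Z) = \<one>\<^bsub>G Mod N\<^esub>"
        using lin_comb_FactGroup_image[OF N fin Z inj] c by simp
      then have "d (?\<pi> x) = 0"
        using indep_img x by blast
      then show "c x = 0"
        unfolding d_def using inj x by simp
    qed
  next
    assume indep: "\<forall>c. lin_comb G c Z \<in> N \<longrightarrow> (\<forall>x\<in>Z. c x = 0)"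
    show "\<forall>d. lin_comb (G Mod N) d (?\<pi> ` Z) \<in> {\<one>\<^bsub>G Mod N\<^esub>} \<longrightarrow> (\<forall>y\<in>?\<pi> ` Z. d y = 0)"
      using indep lin_comb_FactGroup_image[OF N fin Z inj] by auto
  qed
  ultimately show ?thesis
    unfolding indep_mod_def using img Z by blast
qed

lemma indep_mod_cards_FactGroup_image:
  assumes N: "subgroup N G" and M: "M \<subseteq> carrier G"
  shows "indep_mod_cards (G Mod N) {\<one>\<^bsub>G Mod N\<^esub>} ((\<lambda>x. N #> x) ` M) = indep_mod_cards G N M"
proof (intro equalityI subsetI)
  fix k assume "k \<in> indep_mod_cards (G Mod N) {\<one>\<^bsub>G Mod N\<^esub>} ((\<lambda>x. N #> x) ` M)"
  then obtain Y where k: "k = card Y" and "Y \<subseteq> (\<lambda>x. N #> x) ` M"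
    and Y: "indep_mod (G Mod N) {\<one>\<^bsub>G Mod N\<^esub>} Y"
    unfolding indep_mod_cards_def by blast
  then obtain Z where "Z \<subseteq> M" and inj: "inj_on (\<lambda>x. N #> x) Z" and YZ: "Y = (\<lambda>x. N #> x) ` Z"
    by (auto simp: subset_image_inj)
  moreover have "indep_mod G N Z"
    using indep_mod_FactGroup_image_iff[OF N _ inj] Y YZ M \<open>Z \<subseteq> M\<close> by blast
  moreover have "k = card Z"
    using k YZ card_image[OF inj] by simp
  ultimately show "k \<in> indep_mod_cards G N M"
    unfolding indep_mod_cards_def by blast
next
  fix k assume "k \<in> indep_mod_cards G N M"
  then obtain Z where k: "k = card Z" and "Z \<subseteq> M" and Z: "indep_mod G N Z"
    unfolding indep_mod_cards_def by blast
  have inj: "inj_on (\<lambda>x. N #> x) Z"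
    using inj_on_rcos_if_indep_mod[OF N Z] .
  have "indep_mod (G Mod N) {\<one>\<^bsub>G Mod N\<^esub>} ((\<lambda>x. N #> x) ` Z)"
    using indep_mod_FactGroup_image_iff[OF N _ inj] Z M \<open>Z \<subseteq> M\<close> by blast
  moreover have "(\<lambda>x. N #> x) ` Z \<subseteq> (\<lambda>x. N #> x) ` M"
    using \<open>Z \<subseteq> M\<close> by blast
  moreover have "k = card ((\<lambda>x. N #> x) ` Z)"
    using k card_image[OF inj] by simp
  ultimately show "k \<in> indep_mod_cards (G Mod N) {\<one>\<^bsub>G Mod N\<^esub>} ((\<lambda>x. N #> x) ` M)"
    unfolding indep_mod_cards_def by blast
qed

lemma ab_rank_FactGroup_image:
  assumes N: "subgroup N G" and M: "subgroup M G"
  shows "ab_rank ((G Mod N)\<lparr>carrier := (\<lambda>x. N #> x) ` M\<rparr>) = Max (indep_mod_cards G N M)"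
  using comm_group.ab_rank_subgroup[OF abelian_FactGroup[OF N] subgroup_rcos_image[OF N M]]
    indep_mod_cards_FactGroup_image[OF N subgroup.subset[OF M]] by simp

section \<open>Passing to the quotient by a cyclic subgroup\<close>

lemma is_loop_iff_ord: "a \<in> carrier G \<Longrightarrow> is_loop G a \<longleftrightarrow> ord a \<noteq> 0"
  unfolding is_loop_def torsion_set_def by (auto simp: ord_eq_0)

lemma indep_mod_cards_generate_torsion:
  assumes a: "a \<in> carrier G" and "ord a \<noteq> 0"
  shows "indep_mod_cards G (generate G {a}) M = indep_mod_cards G {\<one>} M"
proof -
  have "indep_mod G (generate G {a}) Y \<longleftrightarrow> indep_mod G {\<one>} Y" for Y
  proof
    assume indep: "indep_mod G {\<one>} Y"
    have "int (ord a) \<noteq> 0" "a [^] int (ord a) \<in> {\<one>}"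
      using a \<open>ord a \<noteq> 0\<close> by (simp_all add: int_pow_int)
    then have "indep_mod G (generate G (insert a {\<one>})) Y"
      using indep_mod_generate_insert_torsion[OF triv_subgroup a _ _ indep] by blast
    then show "indep_mod G (generate G {a}) Y"
      using indep_mod_antimono mono_generate[of "{a}" "insert a {\<one>}"] by blast
  next
    assume "indep_mod G (generate G {a}) Y"
    then show "indep_mod G {\<one>} Y"
      using indep_mod_antimono generate.one[of G "{a}"] by blast
  qed
  then show ?thesis
    unfolding indep_mod_cards_def by simp
qed

lemma indep_mod_insert_generate_free:
  assumes a: "a \<in> carrier G" and free: "ord a = 0" and indep: "indep_mod G (generate G {a}) Y"
  shows "a \<notin> Y \<and> indep_mod G {\<one>} (insert a Y)"
proof
  have fin: "finite Y" and Y: "Y \<subseteq> carrier G"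
    and zero: "\<And>c. lin_comb G c Y \<in> generate G {a} \<Longrightarrow> \<forall>x\<in>Y. c x = 0"
    using indep unfolding indep_mod_def by auto
  have a_gen: "a \<in> generate G {a}"
    by (rule generate.incl) simp
  show "a \<notin> Y"
  proof
    assume "a \<in> Y"
    then have "lin_comb G (\<lambda>y. if y \<in> {a} then 1 else 0) Y = lin_comb G (\<lambda>_. 1) {a}"
      using lin_comb_extend[OF fin _ Y, of "{a}"] by simp
    also have "\<dots> = a"
      using a lin_comb_insert[of "{}" a] by (simp add: lin_comb_def)
    finally have "lin_comb G (\<lambda>y. if y \<in> {a} then 1 else 0) Y \<in> generate G {a}"
      using a_gen by simp
    then show False
      using zero \<open>a \<in> Y\<close> by fastforce
  qed
  show "indep_mod G {\<one>} (insert a Y)"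
    unfolding indep_mod_def
  proof (intro conjI allI impI ballI)
    show "finite (insert a Y)" "insert a Y \<subseteq> carrier G"
      using fin Y a by auto
    fix c x assume c: "lin_comb G c (insert a Y) \<in> {\<one>}" and x: "x \<in> insert a Y"
    then have rel: "a [^] c a \<otimes> lin_comb G c Y = \<one>"
      using lin_comb_insert[OF fin \<open>a \<notin> Y\<close>] Y a by simp
    then have "lin_comb G c Y = a [^] (- c a)"
      using a Y by (metis int_pow_closed int_pow_neg inv_equality lin_comb_closed m_comm)
    then have "lin_comb G c Y \<in> generate G {a}"
      using generate_pow[OF a] by blast
    then have cY: "\<forall>y\<in>Y. c y = 0"
      using zero by blast
    then have "lin_comb G c Y = \<one>"
      using lin_comb_cong[of Y c "\<lambda>_. 0"] Y by simp
    then have "a [^] c a = \<one>"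
      using rel a by simp
    then have "c a = 0"
      using int_pow_eq_id[OF a] free by simp
    then show "c x = 0"
      using x cY by auto
  qed
qed

lemma indep_mod_generate_Diff:
  assumes a: "a \<in> carrier G" and indep: "indep_mod G {\<one>} Y" and "Y \<noteq> {}"
  shows "\<exists>x\<in>Y. indep_mod G (generate G {a}) (Y - {x})"
proof -
  have "generate G {a} \<subseteq> generate G (insert a {\<one>})"
    by (rule mono_generate) blast
  moreover have "\<exists>x\<in>Y. indep_mod G (generate G (insert a {\<one>})) (Y - {x})"
    using \<open>Y \<noteq> {}\<close> indep_mod_subset indep_mod_generate_insert_exchange[OF triv_subgroup a indep]
    by blast
  ultimately show ?thesis
    using indep_mod_antimono by blast
qed

lemma indep_mod_cards_generate_free:
  assumes M: "subgroup M G" and "a \<in> M" and free: "ord a = 0"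
  shows "indep_mod_cards G {\<one>} M = insert 0 (Suc ` indep_mod_cards G (generate G {a}) M)"
proof (intro equalityI subsetI)
  have a: "a \<in> carrier G"
    using M \<open>a \<in> M\<close> subgroup.subset by blast
  fix k assume "k \<in> indep_mod_cards G {\<one>} M"
  then obtain Y where k: "k = card Y" and "Y \<subseteq> M" and Y: "indep_mod G {\<one>} Y"
    unfolding indep_mod_cards_def by blast
  show "k \<in> insert 0 (Suc ` indep_mod_cards G (generate G {a}) M)"
  proof (cases "Y = {}")
    case True
    then show ?thesis
      using k by simp
  next
    case False
    then obtain x where "x \<in> Y" and "indep_mod G (generate G {a}) (Y - {x})"
      using indep_mod_generate_Diff[OF a Y] by blast
    moreover have "k = Suc (card (Y - {x}))"
      using k \<open>x \<in> Y\<close> Y card_Suc_Diff1 unfolding indep_mod_def by metis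
    ultimately show ?thesis
      unfolding indep_mod_cards_def using \<open>Y \<subseteq> M\<close> by blast
  qed
next
  have a: "a \<in> carrier G"
    using M \<open>a \<in> M\<close> subgroup.subset by blast
  fix k assume "k \<in> insert 0 (Suc ` indep_mod_cards G (generate G {a}) M)"
  then consider "k = 0" | Y where "k = Suc (card Y)" "Y \<subseteq> M" "indep_mod G (generate G {a}) Y"
    unfolding indep_mod_cards_def by blast
  then show "k \<in> indep_mod_cards G {\<one>} M"
  proof cases
    case 1
    then show ?thesis
      using zero_in_indep_mod_cards by simp
  next
    case (2 Y)
    then have "a \<notin> Y" "indep_mod G {\<one>} (insert a Y)" "finite Y"
      using indep_mod_insert_generate_free[OF a free] unfolding indep_mod_def by blast+
    then show ?thesis
      unfolding indep_mod_cards_def using 2 \<open>a \<in> M\<close> by (intro CollectI exI[of _ "insert a Y"]) simp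
  qed
qed

lemma generate_FactGroup_image:
  assumes a: "a \<in> carrier G" and S: "S \<subseteq> carrier G"
  shows "generate (G Mod generate G {a}) ((\<lambda>x. generate G {a} #> x) ` S)
         = (\<lambda>x. generate G {a} #> x) ` generate G (insert a S)"
proof -
  define N where "N = generate G {a}"
  define \<pi> where "\<pi> = (\<lambda>x. N #> x)"
  have N: "subgroup N G"
    unfolding N_def using generate_is_subgroup a by auto
  interpret Q: comm_group "G Mod N"
    using abelian_FactGroup[OF N] .
  interpret group_hom G "G Mod N" \<pi>
    unfolding \<pi>_def using group_hom_rcos_FactGroup[OF N] .
  have "\<pi> a = \<one>\<^bsub>G Mod N\<^esub>"
    unfolding \<pi>_def N_def using rcos_eq_self_iff[OF N[unfolded N_def] a] generate.incl[of a "{a}" G]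
    by simp
  then have "\<pi> a \<in> generate (G Mod N) (\<pi> ` S)"
    by (simp only: generate.one)
  moreover have "\<pi> ` S \<subseteq> generate (G Mod N) (\<pi> ` S)"
    by (auto intro: generate.incl)
  moreover have "\<pi> ` S \<subseteq> carrier (G Mod N)"
    using S by auto
  ultimately have "generate (G Mod N) (\<pi> ` insert a S) \<subseteq> generate (G Mod N) (\<pi> ` S)"
    by (intro Q.generate_subgroup_incl Q.generate_is_subgroup) auto
  then have "generate (G Mod N) (\<pi> ` insert a S) = generate (G Mod N) (\<pi> ` S)"
    by (simp add: Q.mono_generate image_mono subset_antisym subset_insertI)
  moreover have "\<pi> ` generate G (insert a S) = generate (G Mod N) (\<pi> ` insert a S)"
    using generate_img[of "insert a S"] a S by simp
  ultimately show ?thesis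
    unfolding N_def \<pi>_def by simp
qed

lemma gen_rank_FactGroup_image:
  assumes a: "a \<in> carrier G" and S: "S \<subseteq> carrier G"
  shows "gen_rank (G Mod generate G {a}) ((\<lambda>x. generate G {a} #> x) ` S)
         = Max (indep_mod_cards G (generate G {a}) (generate G (insert a S)))"
  unfolding gen_rank_def generate_FactGroup_image[OF a S]
  using ab_rank_FactGroup_image generate_is_subgroup a S by simp

lemma gen_rank_insert:
  assumes "finitely_generated_group G" and a: "a \<in> carrier G" and S: "S \<subseteq> carrier G"
  shows "gen_rank G (insert a S) =
    (if is_loop G a then gen_rank (G Mod generate G {a}) ((\<lambda>x. generate G {a} #> x) ` S)
     else Suc (gen_rank (G Mod generate G {a}) ((\<lambda>x. generate G {a} #> x) ` S)))"
proof -
  define M where "M = generate G (insert a S)"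
  have M: "subgroup M G"
    unfolding M_def using generate_is_subgroup a S by auto
  have rank: "gen_rank G (insert a S) = Max (indep_mod_cards G {\<one>} M)"
    unfolding gen_rank_def M_def[symmetric] using ab_rank_subgroup[OF M] .
  show ?thesis
  proof (cases "is_loop G a")
    case True
    then show ?thesis
      using rank gen_rank_FactGroup_image[OF a S] indep_mod_cards_generate_torsion[OF a]
      unfolding M_def by (simp add: is_loop_iff_ord[OF a])
  next
    case False
    then have free: "ord a = 0"
      using is_loop_iff_ord[OF a] by simp
    have "a \<in> M"
      unfolding M_def by (rule generate.incl) simp
    define K where "K = indep_mod_cards G (generate G {a}) M"
    have "finite K"
      unfolding K_def using finite_indep_mod_cards[OF assms(1)] generate_is_subgroup a by auto
    moreover have "K \<noteq> {}"
      unfolding K_def using zero_in_indep_mod_cards by blast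
    ultimately
    have "Max (insert 0 (Suc ` K)) = Suc (Max K)"
      by (simp add: mono_Max_commute[symmetric] mono_def)
    then show ?thesis
      using False rank gen_rank_FactGroup_image[OF a S]
        indep_mod_cards_generate_free[OF M \<open>a \<in> M\<close> free]
      unfolding M_def K_def by simp
  qed
qed

section \<open>Multiplicities\<close>

lemma FactGroup_iso_FactGroup_image:
  assumes N: "subgroup N G" and M: "subgroup M G" and "N \<subseteq> M"
  shows "G Mod M \<cong> (G Mod N) Mod ((\<lambda>x. N #> x) ` M)"
proof -
  define \<pi> where "\<pi> = (\<lambda>x. N #> x)"
  define M' where "M' = \<pi> ` M"
  interpret Q: comm_group "G Mod N"
    using abelian_FactGroup[OF N] .
  have M': "subgroup M' (G Mod N)"
    unfolding M'_def \<pi>_def using subgroup_rcos_image[OF N M] .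
  define \<psi> where "\<psi> = (\<lambda>x. M' #>\<^bsub>G Mod N\<^esub> \<pi> x)"
  have "\<psi> \<in> hom G ((G Mod N) Mod M')"
    unfolding \<psi>_def \<pi>_def
    using Group.hom_compose[OF rcos_hom_FactGroup[OF N] Q.rcos_hom_FactGroup[OF M']]
    by (simp add: comp_def)
  then interpret \<psi>: group_hom G "(G Mod N) Mod M'" \<psi>
    using Q.group_hom_rcos_FactGroup[OF M']
    by (simp add: group_hom_def group_hom_axioms_def is_group)
  have "\<psi> ` carrier G = carrier ((G Mod N) Mod M')"
    unfolding \<psi>_def \<pi>_def carrier_FactGroup[of "G Mod N"] carrier_FactGroup[of G N]
    by (simp add: image_comp)
  moreover have "kernel G ((G Mod N) Mod M') \<psi> = M"
  proof -
    have "\<psi> x = M' \<longleftrightarrow> x \<in> M" if x: "x \<in> carrier G" for x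
    proof -
      have "\<pi> x \<in> carrier (G Mod N)"
        unfolding \<pi>_def using hom_in_carrier[OF rcos_hom_FactGroup[OF N] x] .
      then have "\<psi> x = M' \<longleftrightarrow> \<pi> x \<in> M'"
        unfolding \<psi>_def by (rule Q.rcos_eq_self_iff[OF M'])
      also have "\<dots> \<longleftrightarrow> x \<in> M"
      proof
        assume "\<pi> x \<in> M'"
        then obtain m where m: "m \<in> M" "N #> m = N #> x"
          unfolding M'_def \<pi>_def by auto
        have mc: "m \<in> carrier G"
          using m M subgroup.subset by blast
        have "x \<in> N #> m"
          using repr_independenceD[OF N x m(2)] .
        then have "x \<otimes> inv m \<in> N"
          using subgroup.rcos_module_imp[OF N is_group mc] by blast
        then have "x \<otimes> inv m \<otimes> m \<in> M"
          using \<open>N \<subseteq> M\<close> m subgroup.m_closed[OF M] by blast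
        then show "x \<in> M"
          using x mc by (simp add: m_assoc)
      qed (simp add: M'_def)
      finally show ?thesis .
    qed
    then show ?thesis
      unfolding kernel_def using subgroup.subset[OF M] by auto
  qed
  ultimately show ?thesis
    using \<psi>.FactGroup_iso_set unfolding M'_def \<pi>_def is_iso_def by auto
qed

end

lemma num_hom_eq_if_inverse_homs:
  fixes A :: "('a, 'x) monoid_scheme" and A' :: "('b, 'y) monoid_scheme"
    and B :: "('c, 'z) monoid_scheme"
  assumes f: "f \<in> hom A A'" and g: "g \<in> hom A' A"
    and gf: "\<And>x. x \<in> carrier A \<Longrightarrow> g (f x) = x" and fg: "\<And>y. y \<in> carrier A' \<Longrightarrow> f (g y) = y"
  shows "num_hom A B = num_hom A' B"
proof -
  let ?res = "\<lambda>C h. restrict h (carrier C)"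
  define F where "F = (\<lambda>h :: 'b \<Rightarrow> 'c. restrict (h \<circ> f) (carrier A))"
  have F_res: "F (restrict h (carrier A')) = restrict (h \<circ> f) (carrier A)" for h
    unfolding F_def using hom_in_carrier[OF f] by (auto simp: fun_eq_iff)
  have "?res A ` hom A B = F ` ?res A' ` hom A' B"
  proof (intro equalityI subsetI)
    fix u assume "u \<in> ?res A ` hom A B"
    then obtain h where h: "h \<in> hom A B" and u: "u = restrict h (carrier A)"
      by blast
    then have "F (restrict (h \<circ> g) (carrier A')) = u"
      unfolding F_res using gf hom_in_carrier[OF f] by (auto simp: fun_eq_iff)
    then show "u \<in> F ` ?res A' ` hom A' B"
      using Group.hom_compose[OF g h] by blast
  next
    fix u assume "u \<in> F ` ?res A' ` hom A' B"
    then obtain h where "h \<in> hom A' B" and "u = F (restrict h (carrier A'))"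
      by blast
    then show "u \<in> ?res A ` hom A B"
      using Group.hom_compose[OF f] F_res by auto
  qed
  moreover have "inj_on F (?res A' ` hom A' B)"
  proof (rule inj_onI)
    fix u v assume "u \<in> ?res A' ` hom A' B" "v \<in> ?res A' ` hom A' B" and eq: "F u = F v"
    then obtain hu hv where u: "u = restrict hu (carrier A')" and v: "v = restrict hv (carrier A')"
      by blast
    show "u = v"
    proof
      fix y show "u y = v y"
      proof (cases "y \<in> carrier A'")
        case True
        then have "F u (g y) = u y" "F v (g y) = v y"
          unfolding F_def using fg hom_in_carrier[OF g] by auto
        then show ?thesis
          using eq by metis
      next
        case False
        then show ?thesis
          unfolding u v by simp
      qed
    qed
  qed
  ultimately show ?thesis
    unfolding num_hom_def by (simp add: card_image)
qed

lemma hom_torsion_group: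
  assumes "group A" "group A'" and f: "f \<in> hom A A'"
  shows "f \<in> hom (torsion_group A) (torsion_group A')"
proof (rule homI)
  interpret group_hom A A' f
    using assms by (simp add: group_hom_def group_hom_axioms_def)
  fix x assume "x \<in> carrier (torsion_group A)"
  then obtain n :: nat where n: "n > 0" "x [^]\<^bsub>A\<^esub> n = \<one>\<^bsub>A\<^esub>" and x: "x \<in> carrier A"
    unfolding torsion_group_def torsion_set_def by auto
  have "f x [^]\<^bsub>A'\<^esub> n = f (x [^]\<^bsub>A\<^esub> n)"
    by (rule hom_nat_pow[OF x, symmetric])
  also have "\<dots> = \<one>\<^bsub>A'\<^esub>"
    by (simp only: n(2) hom_one)
  finally show "f x \<in> carrier (torsion_group A')"
    unfolding torsion_group_def torsion_set_def using n(1) x by auto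
next
  fix x y assume "x \<in> carrier (torsion_group A)" "y \<in> carrier (torsion_group A)"
  then show "f (x \<otimes>\<^bsub>torsion_group A\<^esub> y) = f x \<otimes>\<^bsub>torsion_group A'\<^esub> f y"
    using f unfolding torsion_group_def torsion_set_def hom_def by simp
qed

lemma num_hom_torsion_group_iso:
  assumes A: "group A" and A': "group A'" and "A \<cong> A'"
  shows "num_hom (torsion_group A) B = num_hom (torsion_group A') B"
proof -
  obtain f where f: "f \<in> iso A A'"
    using \<open>A \<cong> A'\<close> unfolding is_iso_def by blast
  define g where "g = inv_into (carrier A) f"
  have g: "g \<in> iso A' A"
    unfolding g_def using group.iso_set_sym[OF A f] .
  have bij: "bij_betw f (carrier A) (carrier A')"
    using f unfolding iso_def by blast
  show ?thesis
  proof (rule num_hom_eq_if_inverse_homs)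
    show "f \<in> hom (torsion_group A) (torsion_group A')"
      and "g \<in> hom (torsion_group A') (torsion_group A)"
      using hom_torsion_group A A' f g unfolding iso_def by blast+
    show "g (f x) = x" if "x \<in> carrier (torsion_group A)" for x
      using that bij unfolding g_def torsion_group_def torsion_set_def
      by (simp add: bij_betw_inv_into_left)
    show "f (g y) = y" if "y \<in> carrier (torsion_group A')" for y
      using that bij unfolding g_def torsion_group_def torsion_set_def
      by (simp add: bij_betw_inv_into_right)
  qed
qed

lemma (in comm_group) G_mult_insert:
  assumes a: "a \<in> carrier G" and S: "S \<subseteq> carrier G"
  shows "G_mult G H (insert a S) = G_mult (G Mod generate G {a}) H ((\<lambda>x. generate G {a} #> x) ` S)"
proof -
  define N where "N = generate G {a}"
  define M where "M = generate G (insert a S)"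
  have N: "subgroup N G" and M: "subgroup M G"
    unfolding N_def M_def using generate_is_subgroup a S by auto
  have "N \<subseteq> M"
    unfolding N_def M_def by (rule mono_generate) auto
  have "group ((G Mod N) Mod ((\<lambda>x. N #> x) ` M))"
    using comm_group.subgroup_imp_normal[OF abelian_FactGroup[OF N] subgroup_rcos_image[OF N M]]
    by (rule normal.factorgroup_is_group)
  then show ?thesis
    unfolding G_mult_def generate_FactGroup_image[OF a S]
    using num_hom_torsion_group_iso FactGroup_iso_FactGroup_image[OF N M \<open>N \<subseteq> M\<close>]
      normal.factorgroup_is_group[OF subgroup_imp_normal[OF M]]
    unfolding N_def M_def by blast
qed

lemma (in comm_group) tutte_weight_insert:
  assumes "finitely_generated_group G" and a: "a \<in> carrier G" and S: "S \<subseteq> carrier G"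
  shows "real (G_mult G H (insert a S)) * inverse q ^ gen_rank G (insert a S)
    = (if is_loop G a then 1 else inverse q)
      * (real (G_mult (G Mod generate G {a}) H ((\<lambda>x. generate G {a} #> x) ` S))
         * inverse q ^ gen_rank (G Mod generate G {a}) ((\<lambda>x. generate G {a} #> x) ` S))"
  unfolding G_mult_insert[OF a S] gen_rank_insert[OF assms] by simp

lemma sum_Pow_insert:
  assumes "finite J" "i \<notin> J"
  shows "(\<Sum>T\<in>Pow (insert i J). f T) = (\<Sum>T\<in>Pow J. f T) + (\<Sum>T\<in>Pow J. f (insert i T))"
proof -
  have "inj_on (insert i) (Pow J)"
    using assms(2) by (intro inj_onI) (metis PowD insert_ident subsetD)
  then show ?thesis
    unfolding Pow_insert using assms by (subst sum.union_disjoint) (auto simp: sum.reindex)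
qed

theorem mainTheorem4:
  fixes Gam :: "('a, 'b) monoid_scheme" and G :: "('c, 'd) monoid_scheme"
    and A :: "nat \<Rightarrow> 'a" and n i :: nat and q :: real and v :: "nat \<Rightarrow> real"
  assumes "comm_group Gam" and "finitely_generated_group Gam"
    and "comm_group G" and "torsion_wise_finite G"
    and "A ` {1..n} \<subseteq> carrier Gam"
    and "i \<in> {1..n}"
    and "q \<noteq> 0"
  shows "tutteZ Gam G A {1..n} q v =
    (if is_loop Gam (A i)
     then tutteZ Gam G A ({1..n} - {i}) q v
          + v i * tutteZ (Gam Mod generate Gam {A i}) G
                    (\<lambda>j. generate Gam {A i} #>\<^bsub>Gam\<^esub> A j) ({1..n} - {i}) q v
     else tutteZ Gam G A ({1..n} - {i}) q v
          + v i * inverse q * tutteZ (Gam Mod generate Gam {A i}) G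
                    (\<lambda>j. generate Gam {A i} #>\<^bsub>Gam\<^esub> A j) ({1..n} - {i}) q v)"
proof -
  interpret comm_group Gam by fact
  define J where "J = {1..n} - {i}"
  define N where "N = generate Gam {A i}"
  define w where "w = (if is_loop Gam (A i) then 1 else inverse q)"
  let ?summand = "\<lambda>T. real (G_mult Gam G (A ` T)) * inverse q ^ gen_rank Gam (A ` T) * (\<Prod>j\<in>T. v j)"
  have I: "{1..n} = insert i J" "i \<notin> J" "finite J"
    unfolding J_def using \<open>i \<in> {1..n}\<close> by auto
  have "?summand (insert i T) = v i * w * (real (G_mult (Gam Mod N) G ((\<lambda>j. N #>\<^bsub>Gam\<^esub> A j) ` T))
      * inverse q ^ gen_rank (Gam Mod N) ((\<lambda>j. N #>\<^bsub>Gam\<^esub> A j) ` T) * (\<Prod>j\<in>T. v j))" if "T \<subseteq> J" for T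
  proof -
    have "finite T" "i \<notin> T"
      using that I(2,3) finite_subset by auto
    moreover have "A ` T \<subseteq> carrier Gam" "A i \<in> carrier Gam"
      using that assms(5,6) unfolding J_def by auto
    ultimately show ?thesis
      using tutte_weight_insert[OF assms(2), of "A i" "A ` T" G q]
      unfolding w_def N_def by (simp add: image_image)
  qed
  then have "(\<Sum>T\<in>Pow J. ?summand (insert i T))
      = v i * w * tutteZ (Gam Mod N) G (\<lambda>j. N #>\<^bsub>Gam\<^esub> A j) J q v"
    unfolding tutteZ_def sum_distrib_left by (intro sum.cong) auto
  moreover have "tutteZ Gam G A {1..n} q v
      = tutteZ Gam G A J q v + (\<Sum>T\<in>Pow J. ?summand (insert i T))"
    unfolding tutteZ_def I(1) using sum_Pow_insert[OF I(3,2)] .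
  ultimately show ?thesis
    unfolding J_def N_def w_def by simp
qed

end
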